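(* Let $D=\{(x,t)\in[-2,2]^2: x^2-2\le t\}$, let $p\colon D\to[-2,2]$, $p(x,t)=t$, and let $\phi\colon D\to D$, $\phi(x,t)=(x^2-2,\;x^2(t-2)+2)$. Suppose $E\subset D$ is a Borel set such that (i) $\phi(E)\subset E$ modulo Lebesgue-null sets (i.e. $\phi(E)\setminus E$ has two-dimensional Lebesgue measure zero), and (ii) for almost every $t\in p(E)$, the fiber $p^{-1}(t)=\{(x,t): x^2\le t+2\}$ is, up to a set of one-dimensional Lebesgue measure zero in the fiber, either contained in $E$ or contained in $D\setminus E$. Then $E$ is either Lebesgue-null or Lebesgue-conull in $D$.
   Context: Measures on $D$ are two-dimensional Lebesgue measure; measures on fibers $p^{-1}(t)$ (horizontal segments) are one-dimensional Lebesgue measure; "almost every $t$" refers to one-dimensional Lebesgue measure. *)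

theory Defs
  imports "HOL-Analysis.Analysis"
begin

definition Dom :: "(real \<times> real) set" where
  "Dom = {(x, t). -2 \<le> x \<and> x \<le> 2 \<and> -2 \<le> t \<and> t \<le> 2 \<and> x^2 - 2 \<le> t}"

definition proj_p :: "real \<times> real \<Rightarrow> real" where
  "proj_p z = snd z"

definition phi :: "real \<times> real \<Rightarrow> real \<times> real" where
  "phi z = (fst z ^ 2 - 2, (fst z)^2 * (snd z - 2) + 2)"

text \<open>The fiber over t, identified with its x-coordinates (a subset of the line),
  so that one-dimensional Lebesgue measure applies.\<close>
definition fiber :: "real \<Rightarrow> real set" where
  "fiber t = {x. (x, t) \<in> Dom}"

end

theory Submission
  imports Defs
begin

(* Let P and Q be the sets of levels t over which E, respectively Dom - E, has a null
   horizontal slice; by (ii) almost every level lies in P or in Q. The second coordinate of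
   phi maps the fiber over t onto the levels [t^2 - 2, 2], and phi is locally invertible off
   the null line x = 0. So if t is in Q, invariance and Fubini show that almost no level of
   [t^2 - 2, 2] lies in P, i.e. almost all of them lie in Q again. The set G of such levels
   therefore spreads from t to almost all of (t^2 - 2, 2); minimising t^2 over G shows that
   either G is empty (then almost every level is in P and E is null) or G has full measure
   in (-2, 2) (then Dom - E is null). *)

definition hslice :: "('a \<times> 'b) set \<Rightarrow> 'b \<Rightarrow> 'a set" where
  "hslice X t = (\<lambda>x. (x, t)) -` X"

lemma sets_hslice:
  fixes X :: "('a::euclidean_space \<times> 'b::euclidean_space) set"
  assumes "X \<in> sets borel"
  shows "hslice X t \<in> sets borel"
  using measurable_sets[of "\<lambda>x::'a. (x, t)" borel borel X] assms by (simp add: hslice_def)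

lemma sets_pair_lborel:
  "sets (lborel \<Otimes>\<^sub>M lborel) = sets (borel :: ('a::euclidean_space \<times> 'b::euclidean_space) measure)"
  by (simp only: lborel_prod sets_lborel)

lemma borel_measurable_emeasure_hslice:
  fixes X :: "('a::euclidean_space \<times> 'b::euclidean_space) set"
  assumes "X \<in> sets borel"
  shows "(\<lambda>t. emeasure lborel (hslice X t)) \<in> borel_measurable lborel"
  using lborel_pair.measurable_emeasure_Pair2[of X] assms
  by (simp only: hslice_def sets_pair_lborel)

definition null_slices :: "('a::euclidean_space \<times> 'b) set \<Rightarrow> 'b set" where
  "null_slices X = {t. hslice X t \<in> null_sets lebesgue}"

lemma null_sets_iff_AE_null_slices:
  fixes X :: "('a::euclidean_space \<times> 'b::euclidean_space) set"
  assumes X: "X \<in> sets borel"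
  shows "X \<in> null_sets lebesgue \<longleftrightarrow> (AE t in lborel. t \<in> null_slices X)"
proof -
  have "X \<in> null_sets lebesgue \<longleftrightarrow> emeasure lborel X = 0"
    using X by (simp add: null_sets_completion_iff null_sets_def)
  also have "\<dots> \<longleftrightarrow> (\<integral>\<^sup>+t. emeasure lborel (hslice X t) \<partial>lborel) = 0"
    using lborel_pair.emeasure_pair_measure_alt2[of X] X
    by (simp only: hslice_def sets_pair_lborel lborel_prod sets_lborel)
  also have "\<dots> \<longleftrightarrow> (AE t in lborel. emeasure lborel (hslice X t) = 0)"
    by (rule nn_integral_0_iff_AE[OF borel_measurable_emeasure_hslice[OF X]])
  also have "\<dots> \<longleftrightarrow> (AE t in lborel. t \<in> null_slices X)"
    using sets_hslice[OF X] by (simp add: null_slices_def null_sets_completion_iff null_sets_def)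
  finally show ?thesis .
qed

lemma AE_null_slices:
  fixes X :: "('a::euclidean_space \<times> 'b::euclidean_space) set"
  assumes "X \<in> null_sets lebesgue"
  shows "AE t in lborel. t \<in> null_slices X"
proof -
  obtain N where N: "N \<in> null_sets lborel" "X \<subseteq> N"
    using assms by (auto simp: null_sets_completion_iff2)
  have "N \<in> sets borel"
    using null_setsD2[OF N(1)] by simp
  then have "AE t in lborel. t \<in> null_slices N"
    using N(1) null_sets_iff_AE_null_slices[of N] by (simp add: null_sets_completionI)
  then show ?thesis
    by eventually_elim
      (use N(2) in \<open>auto simp: null_slices_def hslice_def intro: null_sets_completion_subset[rotated]\<close>)
qed

lemma null_sets_over_null_slices:
  fixes X :: "('a::euclidean_space \<times> 'b::euclidean_space) set"
  assumes X: "X \<in> sets borel"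
  shows "{z \<in> X. snd z \<in> null_slices X} \<in> null_sets lebesgue"
proof -
  let ?Z = "{t. emeasure lborel (hslice X t) = 0}"
  have "?Z \<in> sets borel"
    using measurable_sets[OF borel_measurable_emeasure_hslice[OF X], of "{0}"] by (simp add: vimage_def)
  then have "snd -` ?Z \<in> sets (borel :: ('a \<times> 'b) measure)"
    using measurable_sets[of snd borel borel ?Z] by (simp add: borel_measurable_continuous_onI continuous_on_snd)
  moreover have "{z \<in> X. snd z \<in> null_slices X} = X \<inter> snd -` ?Z"
    using sets_hslice[OF X] by (auto simp: null_slices_def null_sets_completion_iff null_sets_def)
  ultimately have "{z \<in> X. snd z \<in> null_slices X} \<in> sets borel"
    using X by simp
  moreover have "t \<in> null_slices {z \<in> X. snd z \<in> null_slices X}" for t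
    by (cases "t \<in> null_slices X") (auto simp: null_slices_def hslice_def vimage_def)
  ultimately show ?thesis
    using null_sets_iff_AE_null_slices by blast
qed

lemma negligible_if_negligible_image_left_inverse:
  fixes f :: "'a::euclidean_space \<Rightarrow> 'b::euclidean_space" and g :: "'b \<Rightarrow> 'a"
  assumes "DIM('b) \<le> DIM('a)" "negligible (f ` S)" "g differentiable_on f ` S"
    and "\<And>z. z \<in> S \<Longrightarrow> g (f z) = z"
  shows "negligible S"
proof -
  have "S = g ` f ` S"
    using assms(4) by (force simp: image_comp)
  then show ?thesis
    using negligible_differentiable_image_negligible[OF assms(1-3)] by simp
qed

lemma negligible_if_negligible_phi_image:
  assumes "negligible (phi ` S)"
  shows "negligible S"
proof -
  have branch: "negligible (S \<inter> {z. 0 < s * fst z})" if s: "s = 1 \<or> s = -1" for s :: real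
  proof (rule negligible_if_negligible_image_left_inverse
      [where g = "\<lambda>w. (s * sqrt (fst w + 2), (snd w - 2) / (fst w + 2) + 2)"])
    show "negligible (phi ` (S \<inter> {z. 0 < s * fst z}))"
      by (rule negligible_subset[OF assms]) auto
    have "(\<lambda>w. (s * sqrt (fst w + 2), (snd w - 2) / (fst w + 2) + 2)) differentiable at w"
      if "-2 < fst w" for w :: "real \<times> real"
      unfolding differentiable_def using that by (auto intro!: derivative_eq_intros exI)
    moreover have "-2 < fst w" if "w \<in> phi ` (S \<inter> {z. 0 < s * fst z})" for w
      using that s by (auto simp: phi_def)
    ultimately show "(\<lambda>w. (s * sqrt (fst w + 2), (snd w - 2) / (fst w + 2) + 2))
        differentiable_on phi ` (S \<inter> {z. 0 < s * fst z})"
      by (simp add: differentiable_at_imp_differentiable_on)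
    fix z assume "z \<in> S \<inter> {z. 0 < s * fst z}"
    then have "s * \<bar>fst z\<bar> = fst z" "fst z \<noteq> 0"
      using s by (auto simp: zero_less_mult_iff)
    then show "(s * sqrt (fst (phi z) + 2), (snd (phi z) - 2) / (fst (phi z) + 2) + 2) = z"
      by (simp add: phi_def prod_eq_iff)
  qed simp
  have "negligible {z :: real \<times> real. (1, 0) \<bullet> z = 0}"
    by (rule negligible_hyperplane) (simp add: zero_prod_def)
  then have "negligible ((S \<inter> {z. 0 < 1 * fst z}) \<union> (S \<inter> {z. 0 < -1 * fst z})
      \<union> {z. (1, 0) \<bullet> z = 0})"
    using branch[of 1] branch[of "-1"] by (intro negligible_Un) simp_all
  then show ?thesis
    by (rule negligible_subset) (auto simp: inner_prod_def)
qed

lemma Icc_subset_image_snd_phi_fiber: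
  assumes "-2 \<le> t" "t < 2"
  shows "{t^2 - 2..2} \<subseteq> (\<lambda>x. snd (phi (x, t))) ` fiber t"
proof
  fix y assume y: "y \<in> {t^2 - 2..2}"
  define q where "q = (y - 2) / (t - 2)"
  have "0 \<le> q"
    using y assms by (simp add: q_def divide_nonpos_neg)
  moreover have "q \<le> t + 2"
  proof -
    have "(y - 2) / (t - 2) \<le> (t^2 - 4) / (t - 2)"
      using y assms by (intro divide_right_mono_neg) auto
    also have "\<dots> = t + 2"
      using assms by (simp add: field_simps power2_eq_square)
    finally show ?thesis by (simp add: q_def)
  qed
  ultimately have "sqrt q \<in> fiber t"
    using assms by (auto simp: fiber_def Dom_def intro: order_trans[OF _ real_sqrt_ge_zero] real_le_lsqrt)
  moreover have "snd (phi (sqrt q, t)) = y"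
    using assms \<open>0 \<le> q\<close> by (simp add: phi_def q_def)
  ultimately show "y \<in> (\<lambda>x. snd (phi (x, t))) ` fiber t"
    by (metis image_eqI)
qed

lemma negligible_levels_if_negligible_fiber_preimage:
  assumes "-2 \<le> t" "t < 2" "negligible {x \<in> fiber t. snd (phi (x, t)) \<in> P}"
  shows "negligible (P \<inter> {t^2 - 2..2})"
proof (rule negligible_subset)
  show "negligible ((\<lambda>x. snd (phi (x, t))) ` {x \<in> fiber t. snd (phi (x, t)) \<in> P})"
    by (rule negligible_differentiable_image_negligible[OF _ assms(3)])
      (simp_all add: phi_def power2_eq_square)
  show "P \<inter> {t^2 - 2..2} \<subseteq> (\<lambda>x. snd (phi (x, t))) ` {x \<in> fiber t. snd (phi (x, t)) \<in> P}"
    using Icc_subset_image_snd_phi_fiber[OF assms(1,2)] by fast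
qed

lemma ex_mem_Ioo_if_AE_mem:
  fixes G :: "real set"
  assumes "a < b" "AE s in lborel. s \<in> {a<..<b} \<longrightarrow> s \<in> G"
  shows "\<exists>s\<in>G. a < s \<and> s < b"
proof (rule ccontr)
  assume none: "\<not> (\<exists>s\<in>G. a < s \<and> s < b)"
  have "AE s in lborel. s \<notin> {a<..<b}"
    using assms(2) by (rule AE_mp) (use none in \<open>auto intro!: AE_I2\<close>)
  then have "{a<..<b} \<in> null_sets lborel"
    by (simp add: AE_iff_null_sets)
  then show False
    using assms(1) by (simp add: null_sets_def)
qed

lemma spreading_set_has_small_squares:
  fixes G :: "real set"
  assumes "G \<noteq> {}" "G \<subseteq> {-2<..<2}"
    and spread: "\<And>t. t \<in> G \<Longrightarrow> AE s in lborel. s \<in> {t^2 - 2<..<2} \<longrightarrow> s \<in> G"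
    and "0 < e"
  shows "\<exists>t\<in>G. t^2 < e"
proof -
  define r where "r = Inf (abs ` G)"
  have bdd: "bdd_below (abs ` G)"
    by (auto intro: bdd_belowI[of _ 0])
  have r_le: "r \<le> \<bar>t\<bar>" if "t \<in> G" for t
    using bdd that by (auto simp: r_def intro: cInf_lower)
  have below_r: "\<exists>t\<in>G. \<bar>t\<bar> < y" if "r < y" for y
    using that assms(1) bdd by (auto simp: r_def cInf_less_iff)
  txt \<open>If \<open>r > 0\<close>, some \<open>t \<in> G\<close> has \<open>t^2 - 2 < r\<close>, and it spreads to points
    of modulus below \<open>r\<close>.\<close>
  have "r = 0"
  proof (rule ccontr)
    assume "r \<noteq> 0"
    moreover have "0 \<le> r"
      unfolding r_def using assms(1) by (auto intro: cInf_greatest)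
    ultimately have "0 < r" by simp
    obtain t0 where "t0 \<in> G"
      using assms(1) by auto
    then have "r < 2"
      using r_le[of t0] assms(2) by force
    then have "r * r < r + 2"
      using mult_strict_right_mono[OF \<open>r < 2\<close> \<open>0 < r\<close>] by linarith
    then have "r < sqrt (r + 2)"
      by (intro real_less_rsqrt) (simp add: power2_eq_square)
    then obtain t where "t \<in> G" "\<bar>t\<bar> < sqrt (r + 2)"
      using below_r by blast
    then have "t^2 - 2 < r"
      by (metis real_sqrt_abs real_sqrt_less_iff diff_less_eq)
    moreover have "AE s in lborel. s \<in> {max (t^2 - 2) (-r)<..<r} \<longrightarrow> s \<in> G"
      using spread[OF \<open>t \<in> G\<close>] by eventually_elim (use \<open>r < 2\<close> in auto)
    ultimately have "\<exists>s\<in>G. max (t^2 - 2) (-r) < s \<and> s < r"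
      using \<open>0 < r\<close> by (intro ex_mem_Ioo_if_AE_mem) auto
    then show False
      using r_le by force
  qed
  then obtain t where "t \<in> G" "\<bar>t\<bar> < sqrt e"
    using below_r[of "sqrt e"] \<open>0 < e\<close> by auto
  then show ?thesis
    by (metis real_sqrt_abs real_sqrt_less_iff)
qed

lemma AE_mem_if_spreading:
  fixes G :: "real set"
  assumes "G \<noteq> {}" "G \<subseteq> {-2<..<2}"
    and spread: "\<And>t. t \<in> G \<Longrightarrow> AE s in lborel. s \<in> {t^2 - 2<..<2} \<longrightarrow> s \<in> G"
  shows "AE s in lborel. s \<in> {-2<..<2} \<longrightarrow> s \<in> G"
proof -
  have "\<forall>n. \<exists>t\<in>G. t^2 < inverse (real (Suc n))"
    using spreading_set_has_small_squares[OF assms(1,2) spread] by simp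
  then obtain f where f: "\<And>n. f n \<in> G" "\<And>n. (f n)^2 < inverse (real (Suc n))"
    by metis
  have "AE s in lborel. \<forall>n. s \<in> {(f n)^2 - 2<..<2} \<longrightarrow> s \<in> G"
    unfolding AE_all_countable using spread f(1) by blast
  then show ?thesis
  proof eventually_elim
    case (elim s)
    show ?case
    proof
      assume s: "s \<in> {-2<..<2}"
      then obtain n where "inverse (real (Suc n)) < s + 2"
        using reals_Archimedean[of "s + 2"] by auto
      then have "s \<in> {(f n)^2 - 2<..<2}"
        using f(2)[of n] s by auto
      then show "s \<in> G"
        using elim by blast
    qed
  qed
qed

lemma AE_dichotomy_if_spreading:
  fixes P Q :: "real set"
  assumes P_or_Q: "AE t in lborel. t \<in> P \<or> t \<in> Q"
    and outside: "AE t in lborel. t \<notin> {-2<..<2} \<longrightarrow> t \<in> P \<and> t \<in> Q"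
    and P_negligible_above_Q: "AE t in lborel. t \<in> {-2<..<2} \<and> t \<in> Q \<longrightarrow> negligible (P \<inter> {t^2 - 2..2})"
  shows "(AE t in lborel. t \<in> P) \<or> (AE t in lborel. t \<in> Q)"
proof -
  define G where "G = {t \<in> {-2<..<2}. t \<in> Q \<and> negligible (P \<inter> {t^2 - 2..2})}"
  have G_sub: "G \<subseteq> {-2<..<2}"
    by (auto simp: G_def)
  have Q_imp_G: "AE t in lborel. t \<in> {-2<..<2} \<and> t \<in> Q \<longrightarrow> t \<in> G"
    using P_negligible_above_Q by eventually_elim (simp add: G_def)
  have spread: "AE s in lborel. s \<in> {t^2 - 2<..<2} \<longrightarrow> s \<in> G" if "t \<in> G" for t
  proof -
    have "AE s in lebesgue. s \<notin> P \<inter> {t^2 - 2..2}"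
      using that by (intro AE_not_in) (simp add: G_def negligible_iff_null_sets)
    then show ?thesis
      unfolding AE_completion_iff using P_or_Q Q_imp_G
    proof eventually_elim
      case (elim s)
      have "s \<in> {t^2 - 2<..<2} \<Longrightarrow> s \<in> {-2<..<2}"
        using zero_le_power2[of t] unfolding greaterThanLessThan_iff by linarith
      then show ?case
        using elim by auto
    qed
  qed
  show ?thesis
  proof (cases "G = {}")
    case True
    have "AE t in lborel. t \<in> P"
      using P_or_Q Q_imp_G outside by eventually_elim (use True in auto)
    then show ?thesis ..
  next
    case False
    have "AE t in lborel. t \<in> {-2<..<2} \<longrightarrow> t \<in> G"
      by (rule AE_mem_if_spreading[OF False G_sub]) (fact spread)
    then have "AE t in lborel. t \<in> Q"
      using outside by eventually_elim (auto simp: G_def)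
    then show ?thesis ..
  qed
qed

lemma sets_Dom: "Dom \<in> sets borel"
proof -
  have "Dom = {z. -2 \<le> fst z \<and> fst z \<le> 2 \<and> -2 \<le> snd z \<and> snd z \<le> 2 \<and> fst z ^ 2 - 2 \<le> snd z}"
    by (auto simp: Dom_def)
  also have "\<dots> \<in> sets borel"
    by (intro borel_closed closed_Collect_conj closed_Collect_le continuous_intros)
  finally show ?thesis .
qed

lemma AE_null_slices_outside_Ioo:
  assumes "X \<subseteq> Dom"
  shows "AE t in lborel. t \<notin> {-2<..<2} \<longrightarrow> t \<in> null_slices X"
  using AE_lborel_singleton[of "2::real"]
proof eventually_elim
  case (elim t)
  show ?case
  proof
    assume "t \<notin> {-2<..<2}"
    then have "hslice X t \<subseteq> {0}"
      using elim assms by (auto simp: hslice_def Dom_def)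
    then show "t \<in> null_slices X"
      unfolding null_slices_def negligible_iff_null_sets[symmetric]
      by (auto intro: negligible_subset[OF negligible_finite])
  qed
qed

lemma AE_conull_slice_imp_few_null_slices:
  assumes E: "E \<in> sets borel" "E \<subseteq> Dom" and invariant: "phi ` E - E \<in> null_sets lebesgue"
  shows "AE t in lborel. t \<in> {-2<..<2} \<and> t \<in> null_slices (Dom - E) \<longrightarrow>
           negligible (null_slices E \<inter> {t^2 - 2..2})"
proof -
  define S where "S = {z \<in> E. snd (phi z) \<in> null_slices E}"
  have "(phi ` E - E) \<union> {z \<in> E. snd z \<in> null_slices E} \<in> null_sets lebesgue"
    using invariant null_sets_over_null_slices[OF E(1)] by (rule null_sets.Un)
  moreover have "phi ` S \<subseteq> (phi ` E - E) \<union> {z \<in> E. snd z \<in> null_slices E}"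
    by (auto simp: S_def)
  ultimately have "negligible (phi ` S)"
    unfolding negligible_iff_null_sets[symmetric] by (rule negligible_subset)
  then have "negligible S"
    by (rule negligible_if_negligible_phi_image)
  moreover have "Dom - E \<in> sets borel"
    using sets_Dom E(1) by (rule sets.Diff)
  ultimately have "S \<union> {z \<in> Dom - E. snd z \<in> null_slices (Dom - E)} \<in> null_sets lebesgue"
    unfolding negligible_iff_null_sets by (intro null_sets.Un null_sets_over_null_slices)
  then show ?thesis
  proof (rule AE_null_slices[THEN eventually_mono], intro impI)
    fix t
    assume N: "t \<in> null_slices (S \<union> {z \<in> Dom - E. snd z \<in> null_slices (Dom - E)})"
      and t: "t \<in> {-2<..<2} \<and> t \<in> null_slices (Dom - E)"
    have "{x \<in> fiber t. snd (phi (x, t)) \<in> null_slices E}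
        \<subseteq> hslice (S \<union> {z \<in> Dom - E. snd z \<in> null_slices (Dom - E)}) t"
      using t by (auto simp: hslice_def S_def fiber_def)
    then have "negligible {x \<in> fiber t. snd (phi (x, t)) \<in> null_slices E}"
      using N unfolding null_slices_def negligible_iff_null_sets[symmetric]
      by (blast intro: negligible_subset)
    then show "negligible (null_slices E \<inter> {t^2 - 2..2})"
      using t by (intro negligible_levels_if_negligible_fiber_preimage) auto
  qed
qed

lemma AE_null_slices_or_null_slices_compl:
  assumes "E \<subseteq> Dom"
    and "AE t in lebesgue. t \<in> proj_p ` E \<longrightarrow>
           ({x \<in> fiber t. (x, t) \<notin> E} \<in> null_sets lebesgue \<or>
            {x \<in> fiber t. (x, t) \<in> E} \<in> null_sets lebesgue)"
  shows "AE t in lborel. t \<in> null_slices E \<or> t \<in> null_slices (Dom - E)"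
  using assms(2)[unfolded AE_completion_iff]
proof eventually_elim
  case (elim t)
  have "hslice E t = {x \<in> fiber t. (x, t) \<in> E}" "hslice (Dom - E) t = {x \<in> fiber t. (x, t) \<notin> E}"
    using assms(1) by (auto simp: hslice_def fiber_def)
  moreover have "hslice E t = {}" if "t \<notin> proj_p ` E"
    using that by (force simp: hslice_def proj_p_def)
  ultimately show ?case
    using elim by (cases "t \<in> proj_p ` E") (auto simp: null_slices_def)
qed

theorem lemma3p3:
  fixes E :: "(real \<times> real) set"
  assumes "E \<in> sets borel"
    and "E \<subseteq> Dom"
    and "phi ` E - E \<in> null_sets lebesgue"
    and "AE t in lebesgue. t \<in> proj_p ` E \<longrightarrow>
           ({x \<in> fiber t. (x, t) \<notin> E} \<in> null_sets lebesgue \<or>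
            {x \<in> fiber t. (x, t) \<in> E} \<in> null_sets lebesgue)"
  shows "E \<in> null_sets lebesgue \<or> Dom - E \<in> null_sets lebesgue"
proof -
  have "AE t in lborel. t \<notin> {-2<..<2} \<longrightarrow> t \<in> null_slices E \<and> t \<in> null_slices (Dom - E)"
    using AE_null_slices_outside_Ioo[OF assms(2)] AE_null_slices_outside_Ioo[OF Diff_subset]
    by eventually_elim simp
  then have "(AE t in lborel. t \<in> null_slices E) \<or> (AE t in lborel. t \<in> null_slices (Dom - E))"
    using AE_null_slices_or_null_slices_compl[OF assms(2,4)]
      AE_conull_slice_imp_few_null_slices[OF assms(1-3)]
    by (intro AE_dichotomy_if_spreading)
  moreover have "Dom - E \<in> sets borel"
    using sets_Dom assms(1) by (rule sets.Diff)
  ultimately show ?thesis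
    using null_sets_iff_AE_null_slices[OF assms(1)] null_sets_iff_AE_null_slices[of "Dom - E"]
    by blast
qed

end
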